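(* Let $0<a<b$, $n\ge1$, and consider the network $T_n$ defined in the context with any resistances $r_e=2^{d(e)-1}X_e$ where every $X_e\in[a,b]$. Let $\Theta^*$ be the unit current flow from the root $r$ to the set of leaves (the unique unit flow attaining the infimum in Thomson's principle $R_n=\inf_{\Theta}\sum_{e}r_e\Theta(e)^2$ over unit flows $\Theta$ from $r$ to the leaves), with $\Theta^*(e)$ denoting the flow through $e$ in the direction away from the root. Then for every edge $e$ of $T_n$, deterministically, $$\Theta^*(e)\le\frac{bn}{a\,(n-d(e)+1)\,2^{d(e)-1}}.$$
   Context: For $n\ge1$, $T_n$ is the edge-rooted tree consisting of a root vertex $r$ joined by a single edge to a vertex $v$, where $v$ is the root of a complete binary tree with $n-1$ levels (so $T_n$ has $2^{n-1}$ leaves at distance $n$ from $r$). The depth $d(e)$ of an edge $e$ is the number of edges on the path that starts with $e$ and ends at $r$; the edge at $r$ has depth $1$. $R_n$ is the effective resistance between $r$ and the set of leaves. A unit flow from $r$ to the leaves is an antisymmetric function on oriented edges with zero net flow at every vertex other than $r$ and the leaves, and net flow $1$ out of $r$ and $1$ into the set of leaves. *)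

theory Defs
  imports Complex_Main
begin

text \<open>The non-root vertices are the vertices of the complete binary
tree rooted at v, encoded as bool lists of length at most n-1: the empty list is v,
and the children of s are True#s and False#s. Leaves are the lists of length n-1.
Every edge of T_n is identified with its endpoint farther from the root r:
the list [] stands for the edge r--v, the list s for the edge parent(s)--s.\<close>

definition tn_edges :: "nat \<Rightarrow> bool list set" where
  "tn_edges n = {s. length s \<le> n - 1}"

definition tn_depth :: "bool list \<Rightarrow> nat" where
  "tn_depth s = length s + 1"

text \<open>A flow is given by its value on each edge in the direction away from the root
(the antisymmetric extension gives the value in the other direction). It is a unit
flow from r to the leaves iff the net flow out of r is 1 and flow is conserved at
every vertex other than r and the leaves (i.e. at v and all internal vertices).
The net flow into the set of leaves is then automatically 1.\<close>

definition tn_unit_flow :: "nat \<Rightarrow> (bool list \<Rightarrow> real) \<Rightarrow> bool" where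
  "tn_unit_flow n \<theta> \<longleftrightarrow>
     \<theta> [] = 1 \<and>
     (\<forall>s. length s < n - 1 \<longrightarrow> \<theta> s = \<theta> (True # s) + \<theta> (False # s))"

definition tn_energy :: "nat \<Rightarrow> (bool list \<Rightarrow> real) \<Rightarrow> (bool list \<Rightarrow> real) \<Rightarrow> real" where
  "tn_energy n X \<theta> = (\<Sum>e\<in>tn_edges n. 2 ^ (tn_depth e - 1) * X e * (\<theta> e)\<^sup>2)"

end

theory Submission
  imports Defs
begin

text \<open>Minimality of the energy against all perturbations by circulations makes the current a
  gradient: the potential drop from the top of an edge e down to the leaves does not depend on
  the descending path. That drop therefore equals \<open>\<Theta>(e) R\<^sub>e\<close>, where \<open>R\<^sub>e\<close> is the effective
  resistance of e in series with the branch below it, and it decreases downwards because the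
  current is nonnegative. Hence \<open>\<Theta>(e) \<le> R\<^sub>r / R\<^sub>e\<close>, and the series-parallel recursion for \<open>R\<close> gives
  \<open>(n - d(e) + 1) 2\<^bsup>d(e)-1\<^esup> a \<le> R\<^sub>e \<le> (n - d(e) + 1) 2\<^bsup>d(e)-1\<^esup> b\<close>, in particular \<open>R\<^sub>r \<le> n b\<close>.\<close>

lemma linear_zero_if_quadratic_nonneg:
  fixes B C :: real
  assumes "\<forall>\<epsilon>. 0 \<le> 2 * \<epsilon> * B + \<epsilon>\<^sup>2 * C"
  shows "B = 0"
proof -
  define \<epsilon> where "\<epsilon> = - B / (\<bar>C\<bar> + 1)"
  have scaled: "\<epsilon> * (\<bar>C\<bar> + 1) = - B" unfolding \<epsilon>_def by simp
  have "(\<bar>C\<bar> + 1)\<^sup>2 * (2 * \<epsilon> * B + \<epsilon>\<^sup>2 * C)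
      = 2 * (\<epsilon> * (\<bar>C\<bar> + 1)) * B * (\<bar>C\<bar> + 1) + (\<epsilon> * (\<bar>C\<bar> + 1))\<^sup>2 * C"
    by algebra
  also have "\<dots> = B\<^sup>2 * (C - 2 * (\<bar>C\<bar> + 1))" unfolding scaled by algebra
  finally have expand: "(\<bar>C\<bar> + 1)\<^sup>2 * (2 * \<epsilon> * B + \<epsilon>\<^sup>2 * C) = B\<^sup>2 * (C - 2 * (\<bar>C\<bar> + 1))" .
  have "0 \<le> (\<bar>C\<bar> + 1)\<^sup>2 * (2 * \<epsilon> * B + \<epsilon>\<^sup>2 * C)"
    using assms by simp
  moreover have "C - 2 * (\<bar>C\<bar> + 1) < 0" by (simp add: abs_if)
  ultimately have "B\<^sup>2 \<le> 0" unfolding expand by (smt (verit) mult_pos_neg zero_le_power2)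
  then show ?thesis by simp
qed

definition par_res :: "real \<Rightarrow> real \<Rightarrow> real" where
  "par_res x y = x * y / (x + y)"

lemma par_res_pos: "0 < x \<Longrightarrow> 0 < y \<Longrightarrow> 0 < par_res x y"
  by (simp add: par_res_def)

lemma par_res_ge:
  assumes "0 < c" "c \<le> x" "c \<le> y"
  shows "c / 2 \<le> par_res x y"
proof -
  have "0 \<le> x * (y - c) + y * (x - c)"
    using assms by (intro add_nonneg_nonneg mult_nonneg_nonneg) auto
  then show ?thesis using assms by (simp add: par_res_def field_simps)
qed

lemma par_res_le:
  assumes "0 < x" "0 < y" "x \<le> c" "y \<le> c"
  shows "par_res x y \<le> c / 2"
proof -
  have "0 \<le> x * (c - y) + y * (c - x)"
    using assms by (intro add_nonneg_nonneg mult_nonneg_nonneg) auto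
  then show ?thesis using assms by (simp add: par_res_def field_simps)
qed

lemma par_res_voltage:
  assumes "0 < x" "0 < y" "i = v / x + v / y"
  shows "v = par_res x y * i"
  using assms by (simp add: par_res_def field_simps)

definition tn_res :: "(bool list \<Rightarrow> real) \<Rightarrow> bool list \<Rightarrow> real" where
  "tn_res X s = 2 ^ length s * X s"

lemma tn_energy_eq: "tn_energy n X \<theta> = (\<Sum>e\<in>tn_edges n. tn_res X e * (\<theta> e)\<^sup>2)"
  by (simp add: tn_energy_def tn_res_def tn_depth_def)

lemma finite_tn_edges: "finite (tn_edges n)"
proof -
  have "finite {xs. set xs \<subseteq> (UNIV :: bool set) \<and> length xs \<le> n - 1}"
    by (rule finite_lists_length_le) simp
  then show ?thesis by (simp add: tn_edges_def)
qed

function tn_branch_res :: "nat \<Rightarrow> (bool list \<Rightarrow> real) \<Rightarrow> bool list \<Rightarrow> real" where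
  "tn_branch_res n X s = tn_res X s +
     (if length s < n - 1
      then par_res (tn_branch_res n X (True # s)) (tn_branch_res n X (False # s)) else 0)"
  by pat_completeness auto
termination by (relation "measure (\<lambda>(n, X, s). n - 1 - length s)") auto

declare tn_branch_res.simps [simp del]

lemma tn_branch_res_leaf: "\<not> length s < n - 1 \<Longrightarrow> tn_branch_res n X s = tn_res X s"
  by (simp add: tn_branch_res.simps)

lemma tn_branch_res_inner:
  "length s < n - 1 \<Longrightarrow> tn_branch_res n X s
     = tn_res X s + par_res (tn_branch_res n X (True # s)) (tn_branch_res n X (False # s))"
  by (simp add: tn_branch_res.simps)

lemma tn_branch_res_bounds:
  assumes "0 < a" "\<forall>e\<in>tn_edges n. a \<le> X e \<and> X e \<le> b" "length s < n"
  shows "real (n - length s) * 2 ^ length s * a \<le> tn_branch_res n X s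
       \<and> tn_branch_res n X s \<le> real (n - length s) * 2 ^ length s * b"
  using assms(2,3)
proof (induction n X s rule: tn_branch_res.induct)
  case (1 n X s)
  have "s \<in> tn_edges n" using "1.prems"(2) by (simp add: tn_edges_def)
  then have X: "a \<le> X s" "X s \<le> b" using "1.prems"(1) by blast+
  show ?case
  proof (cases "length s < n - 1")
    case False
    then have "n - length s = 1" using "1.prems"(2) by simp
    then show ?thesis using X False by (simp add: tn_branch_res_leaf tn_res_def)
  next
    case True
    define L where "L = real (n - length s - 1) * 2 ^ Suc (length s) * a"
    define U where "U = real (n - length s - 1) * 2 ^ Suc (length s) * b"
    have children: "L \<le> tn_branch_res n X (x # s) \<and> tn_branch_res n X (x # s) \<le> U" for x
      using "1.IH" "1.prems"(1) True by (cases x) (auto simp: L_def U_def)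
    have "0 < L" using True assms(1) by (simp add: L_def)
    then have "L / 2 \<le> par_res (tn_branch_res n X (True # s)) (tn_branch_res n X (False # s))
         \<and> par_res (tn_branch_res n X (True # s)) (tn_branch_res n X (False # s)) \<le> U / 2"
      using children par_res_ge par_res_le by (smt (verit))
    moreover have "real (n - length s) * 2 ^ length s * c = 2 ^ length s * c
        + real (n - length s - 1) * 2 ^ Suc (length s) * c / 2" for c :: real
      using True by (simp add: field_simps)
    moreover have "2 ^ length s * a \<le> tn_res X s" "tn_res X s \<le> 2 ^ length s * b"
      using X by (simp_all add: tn_res_def)
    ultimately show ?thesis using True
      by (simp add: tn_branch_res_inner L_def U_def)
  qed
qed

lemma tn_branch_res_pos:
  assumes "\<forall>e\<in>tn_edges n. 0 < X e" "length s \<le> n - 1"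
  shows "0 < tn_branch_res n X s"
  using assms
proof (induction n X s rule: tn_branch_res.induct)
  case (1 n X s)
  have "0 < tn_res X s" using "1.prems" by (simp add: tn_res_def tn_edges_def)
  show ?case
  proof (cases "length s < n - 1")
    case True
    then have "0 < par_res (tn_branch_res n X (True # s)) (tn_branch_res n X (False # s))"
      using "1.IH" "1.prems"(1) by (simp add: par_res_pos)
    with \<open>0 < tn_res X s\<close> True show ?thesis by (simp add: tn_branch_res_inner)
  qed (use \<open>0 < tn_res X s\<close> in \<open>simp add: tn_branch_res_leaf\<close>)
qed

definition tn_true_path :: "nat \<Rightarrow> bool list \<Rightarrow> bool list set" where
  "tn_true_path n c = {u. length u \<le> n - 1 \<and> (\<exists>k. u = replicate k True @ c)}"

lemma tn_true_path_subset: "tn_true_path n c \<subseteq> tn_edges n"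
  by (auto simp: tn_true_path_def tn_edges_def)

lemma Nil_notin_tn_true_path: "[] \<notin> tn_true_path n (x # c)"
  by (simp add: tn_true_path_def)

lemma True_Cons_in_tn_true_path:
  assumes "length s < n - 1"
  shows "True # s \<in> tn_true_path n c \<longleftrightarrow> True # s = c \<or> s \<in> tn_true_path n c"
proof
  assume "True # s \<in> tn_true_path n c"
  then obtain k where k: "True # s = replicate k True @ c" by (auto simp: tn_true_path_def)
  then show "True # s = c \<or> s \<in> tn_true_path n c"
    using assms by (cases k) (auto simp: tn_true_path_def)
next
  assume "True # s = c \<or> s \<in> tn_true_path n c"
  then show "True # s \<in> tn_true_path n c"
  proof
    assume "True # s = c"
    then show ?thesis using assms by (auto simp: tn_true_path_def intro: exI[of _ 0])
  next
    assume "s \<in> tn_true_path n c"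
    then obtain k where "s = replicate k True @ c" by (auto simp: tn_true_path_def)
    then show ?thesis using assms by (auto simp: tn_true_path_def intro: exI[of _ "Suc k"])
  qed
qed

lemma False_Cons_in_tn_true_path:
  assumes "length s < n - 1"
  shows "False # s \<in> tn_true_path n c \<longleftrightarrow> False # s = c"
proof
  assume "False # s \<in> tn_true_path n c"
  then obtain k where "False # s = replicate k True @ c" by (auto simp: tn_true_path_def)
  then show "False # s = c" by (cases k) auto
qed (use assms in \<open>auto simp: tn_true_path_def intro: exI[of _ 0]\<close>)

lemma tn_true_path_step:
  assumes "length t < n - 1"
  shows "tn_true_path n t = insert t (tn_true_path n (True # t))"
    and "t \<notin> tn_true_path n (True # t)"
proof -
  have shift: "replicate (Suc k) True @ t = replicate k True @ True # t" for k
    by (simp add: replicate_app_Cons_same)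
  show "tn_true_path n t = insert t (tn_true_path n (True # t))"
  proof (intro equalityI subsetI)
    fix u assume "u \<in> tn_true_path n t"
    then obtain k where u: "u = replicate k True @ t" "length u \<le> n - 1"
      by (auto simp: tn_true_path_def)
    show "u \<in> insert t (tn_true_path n (True # t))"
    proof (cases k)
      case (Suc j)
      then have "u = replicate j True @ True # t" using u(1) shift by simp
      then show ?thesis using u(2) unfolding tn_true_path_def by blast
    qed (simp add: u)
  next
    fix u assume "u \<in> insert t (tn_true_path n (True # t))"
    then show "u \<in> tn_true_path n t"
    proof
      assume "u = t"
      then show ?thesis using assms by (auto simp: tn_true_path_def intro: exI[of _ 0])
    next
      assume "u \<in> tn_true_path n (True # t)"
      then obtain k where "u = replicate k True @ True # t" "length u \<le> n - 1"
        unfolding tn_true_path_def by blast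
      then have "u = replicate (Suc k) True @ t" "length u \<le> n - 1"
        by (simp_all only: shift)
      then show ?thesis unfolding tn_true_path_def by blast
    qed
  qed
  show "t \<notin> tn_true_path n (True # t)"
    by (auto simp: tn_true_path_def dest: arg_cong[where f = length])
qed

lemma tn_true_path_leaf: "length t = n - 1 \<Longrightarrow> tn_true_path n t = {t}"
  by (auto simp: tn_true_path_def intro: exI[of _ 0])

locale tn_current =
  fixes n :: nat and X \<theta> :: "bool list \<Rightarrow> real"
  assumes X_pos: "\<forall>e\<in>tn_edges n. 0 < X e"
    and unit_flow: "tn_unit_flow n \<theta>"
    and energy_min: "\<forall>\<Theta>'. tn_unit_flow n \<Theta>' \<longrightarrow> tn_energy n X \<theta> \<le> tn_energy n X \<Theta>'"
begin

lemma orthogonal_to_circulations: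
  assumes "\<psi> [] = 0" and "\<forall>s. length s < n - 1 \<longrightarrow> \<psi> s = \<psi> (True # s) + \<psi> (False # s)"
  shows "(\<Sum>e\<in>tn_edges n. tn_res X e * \<theta> e * \<psi> e) = 0"
proof (rule linear_zero_if_quadratic_nonneg, intro allI)
  fix \<epsilon> :: real
  let ?B = "\<Sum>e\<in>tn_edges n. tn_res X e * \<theta> e * \<psi> e"
  let ?C = "\<Sum>e\<in>tn_edges n. tn_res X e * (\<psi> e)\<^sup>2"
  have "tn_unit_flow n (\<lambda>s. \<theta> s + \<epsilon> * \<psi> s)"
    using unit_flow assms by (auto simp: tn_unit_flow_def algebra_simps)
  then have "tn_energy n X \<theta> \<le> tn_energy n X (\<lambda>s. \<theta> s + \<epsilon> * \<psi> s)"
    using energy_min by blast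
  also have "\<dots> = tn_energy n X \<theta> + 2 * \<epsilon> * ?B + \<epsilon>\<^sup>2 * ?C"
    by (simp add: tn_energy_eq sum.distrib sum_distrib_left power2_eq_square algebra_simps)
  finally show "0 \<le> 2 * \<epsilon> * ?B + \<epsilon>\<^sup>2 * ?C" by simp
qed

text \<open>Potential of the upper endpoint of the edge c with the leaves grounded, measured along
  the True-path; by energy minimality any other descent gives the same value.\<close>

definition potential :: "bool list \<Rightarrow> real" where
  "potential c = (\<Sum>e\<in>tn_true_path n c. tn_res X e * \<theta> e)"

lemma potential_children_eq:
  assumes "length t < n - 1"
  shows "potential (True # t) = potential (False # t)"
proof -
  let ?P = "\<lambda>c u. if u \<in> tn_true_path n c then 1 else (0 :: real)"
  define \<psi> where "\<psi> u = ?P (True # t) u - ?P (False # t) u" for u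
  have "(\<Sum>e\<in>tn_edges n. tn_res X e * \<theta> e * \<psi> e) = 0"
  proof (rule orthogonal_to_circulations)
    show "\<psi> [] = 0" by (simp add: \<psi>_def Nil_notin_tn_true_path)
    show "\<forall>s. length s < n - 1 \<longrightarrow> \<psi> s = \<psi> (True # s) + \<psi> (False # s)"
      using assms
      by (auto simp: \<psi>_def True_Cons_in_tn_true_path False_Cons_in_tn_true_path tn_true_path_step(2))
  qed
  moreover have "(\<Sum>e\<in>tn_edges n. tn_res X e * \<theta> e * \<psi> e)
      = potential (True # t) - potential (False # t)"
  proof -
    have restrict: "(\<Sum>e\<in>tn_edges n. f e * ?P c e) = (\<Sum>e\<in>tn_true_path n c. f e)" for f c
    proof -
      have "(\<Sum>e\<in>tn_edges n. f e * ?P c e) = (\<Sum>e\<in>tn_edges n. if e \<in> tn_true_path n c then f e else 0)"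
        by (rule sum.cong) auto
      also have "\<dots> = sum f (tn_edges n \<inter> tn_true_path n c)"
        by (simp add: sum.inter_restrict finite_tn_edges)
      finally show ?thesis using tn_true_path_subset by (metis Int_absorb1)
    qed
    show ?thesis
      by (simp add: \<psi>_def potential_def right_diff_distrib sum_subtractf restrict)
  qed
  ultimately show ?thesis by simp
qed

lemma potential_step:
  assumes "length t < n - 1"
  shows "potential t = tn_res X t * \<theta> t + potential (x # t)"
proof -
  have "potential t = tn_res X t * \<theta> t + potential (True # t)"
    using assms finite_subset[OF tn_true_path_subset finite_tn_edges]
    by (simp add: potential_def tn_true_path_step)
  then show ?thesis using potential_children_eq[OF assms] by (cases x) simp_all
qed

lemma potential_eq_branch_res:
  "length t \<le> n - 1 \<Longrightarrow> potential t = tn_branch_res n X t * \<theta> t"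
proof (induction t rule: measure_induct_rule[where f = "\<lambda>t. n - length t"])
  case (less t)
  show ?case
  proof (cases "length t < n - 1")
    case False
    then show ?thesis using less.prems
      by (simp add: potential_def tn_true_path_leaf tn_branch_res_leaf)
  next
    case True
    define R where "R x = tn_branch_res n X (x # t)" for x
    have R_pos: "0 < R x" for x
      using X_pos True by (simp add: R_def tn_branch_res_pos)
    have child: "potential (x # t) = R x * \<theta> (x # t)" for x
      using less.IH True by (simp add: R_def)
    have "\<theta> (x # t) = potential (True # t) / R x" for x
      using child[of x] R_pos[of x] potential_children_eq[OF True]
      by (cases x) (simp_all add: field_simps)
    moreover have "\<theta> t = \<theta> (True # t) + \<theta> (False # t)"
      using unit_flow True by (simp add: tn_unit_flow_def)
    ultimately have "\<theta> t = potential (True # t) / R True + potential (True # t) / R False"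
      by simp
    then have "potential (True # t) = par_res (R True) (R False) * \<theta> t"
      using R_pos by (intro par_res_voltage) auto
    then show ?thesis
      using potential_step[OF True, of True] True by (simp add: tn_branch_res_inner R_def algebra_simps)
  qed
qed

lemma potential_child:
  assumes "length t < n - 1"
  shows "potential (x # t)
           = par_res (tn_branch_res n X (True # t)) (tn_branch_res n X (False # t)) * \<theta> t"
  using potential_step[OF assms, of x] potential_eq_branch_res[of t] assms
  by (simp add: tn_branch_res_inner algebra_simps)

lemma flow_nonneg: "length t \<le> n - 1 \<Longrightarrow> 0 \<le> \<theta> t"
proof (induction t)
  case Nil
  then show ?case using unit_flow by (simp add: tn_unit_flow_def)
next
  case (Cons x t)
  let ?R = "tn_branch_res n X"
  let ?P = "par_res (?R (True # t)) (?R (False # t))"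
  have pos: "0 < ?R (x # t)" "0 < ?P"
    using X_pos Cons.prems by (simp_all add: tn_branch_res_pos par_res_pos)
  have "?R (x # t) * \<theta> (x # t) = ?P * \<theta> t"
    using potential_eq_branch_res potential_child Cons.prems by simp
  then have "\<theta> (x # t) = ?P * \<theta> t / ?R (x # t)"
    using pos by (simp add: field_simps)
  then show ?case using Cons pos by simp
qed

lemma potential_le_root: "length t \<le> n - 1 \<Longrightarrow> potential t \<le> potential []"
proof (induction t)
  case (Cons x t)
  have "0 \<le> tn_res X t" "0 \<le> \<theta> t"
    using X_pos Cons.prems flow_nonneg by (auto simp: tn_res_def tn_edges_def less_imp_le)
  then have "0 \<le> tn_res X t * \<theta> t" by simp
  then show ?case using Cons potential_step[of t x] by simp
qed simp

lemma flow_le_branch_res_ratio: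
  assumes "length e \<le> n - 1"
  shows "\<theta> e \<le> tn_branch_res n X [] / tn_branch_res n X e"
proof -
  have "tn_branch_res n X e * \<theta> e \<le> tn_branch_res n X [] * \<theta> []"
    using potential_le_root assms by (simp add: potential_eq_branch_res)
  moreover have "\<theta> [] = 1" using unit_flow by (simp add: tn_unit_flow_def)
  moreover have "0 < tn_branch_res n X e" using X_pos assms by (simp add: tn_branch_res_pos)
  ultimately show ?thesis by (simp add: field_simps)
qed

end

theorem lemma6:
  fixes a b :: real and n :: nat and X \<Theta> :: "bool list \<Rightarrow> real"
  assumes "0 < a" and "a < b" and "n \<ge> 1"
    and "\<forall>e\<in>tn_edges n. a \<le> X e \<and> X e \<le> b"
    and "tn_unit_flow n \<Theta>"
    and "\<forall>\<Theta>'. tn_unit_flow n \<Theta>' \<longrightarrow> tn_energy n X \<Theta> \<le> tn_energy n X \<Theta>'"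
  shows "\<forall>e\<in>tn_edges n.
           \<Theta> e \<le> b * real n /
             (a * (real n - real (tn_depth e) + 1) * 2 ^ (tn_depth e - 1))"
proof
  fix e assume "e \<in> tn_edges n"
  then have e: "length e < n" "length e \<le> n - 1" using assms(3) by (auto simp: tn_edges_def)
  have "\<forall>e\<in>tn_edges n. 0 < X e" using assms(1,4) by fastforce
  then interpret tn_current n X \<Theta>
    using assms(5,6) by unfold_locales
  let ?R = "tn_branch_res n X"
  have "\<Theta> e \<le> ?R [] / ?R e" using e(2) by (rule flow_le_branch_res_ratio)
  also have "\<dots> \<le> b * real n / (a * real (n - length e) * 2 ^ length e)"
  proof (rule frac_le)
    show "?R [] \<le> b * real n" "a * real (n - length e) * 2 ^ length e \<le> ?R e"
      using tn_branch_res_bounds[OF assms(1,4), of "[]"] tn_branch_res_bounds[OF assms(1,4), of e]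
        e assms(3) by (simp_all add: mult_ac)
    show "0 < a * real (n - length e) * 2 ^ length e" using assms(1) e by simp
    show "0 \<le> b * real n" using assms(1,2) by simp
  qed
  finally show "\<Theta> e \<le> b * real n / (a * (real n - real (tn_depth e) + 1) * 2 ^ (tn_depth e - 1))"
    using e by (simp add: tn_depth_def of_nat_diff)
qed

end
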